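(* Let $c>0$, $\omega,\omega^\perp\in S^1$ with $\omega\cdot\omega^\perp=0$, $\omega(c)=\frac{1}{\sqrt{c^2+1}}\binom{c\omega}{-1}\in\mathbb{R}^3$, and $\vartheta=\binom{c(\omega+i\omega^\perp)}{-1}\in\mathbb{C}^3$. Let $p\in\mathbb{R}^3$, $\delta>0$, and $y_1,y_2,y_3\in\mathbb{R}^3$ with $y_j\cdot\omega(c)=p\cdot\omega(c)-\delta$, affinely independent together with $p$. Let $D$ be the interior of the tetrahedron with vertices $p,y_1,y_2,y_3$ and $Q$ the interior of the triangle with vertices $y_1,y_2,y_3$. With $\Delta=\{(\alpha,\beta):\alpha,\beta\ge0,\alpha+\beta\le1\}$, let $\Delta_1,\Delta_2,\Delta_3$ be the images of $\Delta$ under $(\alpha,\beta)\mapsto p+\alpha(y_1-p)+\beta(y_2-p)$, $p+\alpha(y_2-p)+\beta(y_3-p)$, $p+\alpha(y_3-p)+\beta(y_1-p)$ respectively, so that $\partial D=Q\cup\Delta_1\cup\Delta_2\cup\Delta_3$, and let $\nu_j$ be the outward unit normal of $D$ on $\Delta_j$; indices are taken modulo $3$ ($\nu_0=\nu_3$, $\nu_4=\nu_1$). Assume the labeling is such that $$(\nu_1\times\nu_3)\cdot\omega(c)<0,\quad(\nu_2\times\nu_1)\cdot\omega(c)<0,\quad(\nu_3\times\nu_2)\cdot\omega(c)<0.$$ Let $$K_D=2\delta\int_Q\frac{dS(y)}{\Big(\frac{\delta\sqrt{c^2+1}}{c}-i(y-p)\cdot\binom{\omega^\perp}{0}\Big)^{3}}.$$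 Then $$K_D\,\vartheta=c^3\sum_{j=1}^3\frac{|(\nu_j\times\nu_{j-1})\times(\nu_{j+1}\times\nu_j)|}{\big((\nu_j\times\nu_{j-1})\cdot\vartheta\big)\big((\nu_{j+1}\times\nu_j)\cdot\vartheta\big)}\,\nu_j.$$
   Context: $\times$ is the cross product in $\mathbb{R}^3$ and $\cdot$ on complex vectors is the bilinear (non-Hermitian) product. *)

theory Defs
  imports "HOL-Analysis.Analysis"
begin

definition bdot :: "complex^3 \<Rightarrow> complex^3 \<Rightarrow> complex" where
  "bdot x z = (\<Sum>i\<in>UNIV. x$i * z$i)"

definition cvec :: "real^3 \<Rightarrow> complex^3" where
  "cvec v = (\<chi> i. complex_of_real (v$i))"

definition omega_c :: "real \<Rightarrow> real^2 \<Rightarrow> real^3" where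
  "omega_c c w = (1 / sqrt (c^2 + 1)) *\<^sub>R vector [c * w$1, c * w$2, -1]"

definition vartheta :: "real \<Rightarrow> real^2 \<Rightarrow> real^2 \<Rightarrow> complex^3" where
  "vartheta c w wp = vector [complex_of_real c * (complex_of_real (w$1) + \<i> * complex_of_real (wp$1)),
                             complex_of_real c * (complex_of_real (w$2) + \<i> * complex_of_real (wp$2)),
                             -1]"

text \<open>n is the outward unit normal of the tetrahedron conv{p,a,b,q} on its face conv{p,a,b}:
  a unit vector orthogonal to the face, pointing away from the opposite vertex q.\<close>
definition outward_unit_normal :: "real^3 \<Rightarrow> real^3 \<Rightarrow> real^3 \<Rightarrow> real^3 \<Rightarrow> real^3 \<Rightarrow> bool" where
  "outward_unit_normal n p a b q \<longleftrightarrow>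
     norm n = 1 \<and> n \<bullet> (a - p) = 0 \<and> n \<bullet> (b - p) = 0 \<and> n \<bullet> (q - p) < 0"

definition open_std_triangle :: "(real \<times> real) set" where
  "open_std_triangle = {(a, b). 0 < a \<and> 0 < b \<and> a + b < 1}"

definition triangle_surface_integral ::
  "real^3 \<Rightarrow> real^3 \<Rightarrow> real^3 \<Rightarrow> (real^3 \<Rightarrow> complex) \<Rightarrow> complex" where
  "triangle_surface_integral y1 y2 y3 f =
     integral open_std_triangle
       (\<lambda>(a, b). complex_of_real (norm (cross3 (y2 - y1) (y3 - y1)))
                 * f (y1 + a *\<^sub>R (y2 - y1) + b *\<^sub>R (y3 - y1)))"

definition K_D :: "real \<Rightarrow> real^2 \<Rightarrow> real \<Rightarrow> real^3 \<Rightarrow> real^3 \<Rightarrow> real^3 \<Rightarrow> real^3 \<Rightarrow> complex" where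
  "K_D c wp \<delta> p y1 y2 y3 =
     complex_of_real (2 * \<delta>) *
     triangle_surface_integral y1 y2 y3
       (\<lambda>y. 1 / (complex_of_real (\<delta> * sqrt (c^2 + 1) / c)
                  - \<i> * complex_of_real ((y - p) \<bullet> vector [wp$1, wp$2, 0])) ^ 3)"

end

theory Submission
  imports Defs
begin

(*
  Let a_j = y_j - p and D = a_1 . (a_2 x a_3).  On Q the denominator of K_D is affine, with vertex
  values z_j = -(a_j . theta) / c whose real parts all equal delta sqrt (c^2 + 1) / c > 0, and
  integrating 1 / L^3 over the standard triangle (the fundamental theorem of calculus, twice)
  gives 1 / (2 z_1 z_2 z_3).  Since delta is the height of the tetrahedron over Q,
  delta |(y_2 - y_1) x (y_3 - y_1)| = |D|, hence K_D = -c^3 |D| / prod_j (a_j . theta).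

  Each outward normal is nu_j = -sgn D (a_j x a_(j+1)) / |a_j x a_(j+1)|, so nu_j x nu_(j-1) and
  nu_(j+1) x nu_j are multiples of a_j and a_(j+1) with coefficients of the same sign, and the
  j-th summand collapses to -sgn D (a_j x a_(j+1)) / ((a_j . theta) (a_(j+1) . theta)).  The sum
  is therefore -sgn D / prod_j (a_j . theta) times
  D theta = sum_j (a_(j+2) . theta) (a_j x a_(j+1)), the expansion of theta in the basis dual to
  the a_j.
*)

lemma inverse_cube_antiderivative:
  fixes A g w :: complex
  assumes "A \<noteq> 0" "A + g * w \<noteq> 0"
  shows "((\<lambda>w. w * (2 * A + g * w) / (2 * A^2 * (A + g * w)^2))
           has_field_derivative 1 / (A + g * w)^3) (at w)"
proof -
  define B where "B = A + g * w"
  have "B \<noteq> 0" using assms B_def by simp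
  have "((\<lambda>w. w * (2 * A + g * w) / (2 * A^2 * (A + g * w)^2)) has_field_derivative
     ((1 * (2 * A + g * w) + w * (g * 1)) * (2 * A^2 * (A + g * w)^2)
       - w * (2 * A + g * w) * (2 * A^2 * (2 * (A + g * w) * (g * 1))))
      / (2 * A^2 * (A + g * w)^2)^2) (at w)"
    using assms by (auto intro!: derivative_eq_intros simp: power2_eq_square)
  moreover have "(1 * (2 * A + g * w) + w * (g * 1)) * (2 * A^2 * (A + g * w)^2)
       - w * (2 * A + g * w) * (2 * A^2 * (2 * (A + g * w) * (g * 1))) = 4 * A^4 * B"
    unfolding B_def by algebra
  moreover have "(2 * A^2 * (A + g * w)^2)^2 = 4 * A^4 * B^4"
    unfolding B_def by algebra
  ultimately show ?thesis
    using assms \<open>B \<noteq> 0\<close> by (simp add: B_def[symmetric] field_simps power_eq_if)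
qed

lemma triangle_slice_antiderivative:
  fixes z1 z2 z3 w :: complex
  assumes "z1 \<noteq> 0" "z3 \<noteq> 0" "z1 + w * (z2 - z1) \<noteq> 0" "z3 + w * (z2 - z3) \<noteq> 0"
  shows "((\<lambda>w. w * (z1 + z3 + w * (z2 - z1 - z3))
                / (2 * z1 * z3 * (z1 + w * (z2 - z1)) * (z3 + w * (z2 - z3))))
     has_field_derivative
       (1 - w) * (2 * (z1 + w * (z2 - z1)) + (z3 - z1) * (1 - w))
       / (2 * (z1 + w * (z2 - z1))^2 * (z3 + w * (z2 - z3))^2)) (at w)"
proof -
  define A where "A = z1 + w * (z2 - z1)"
  define B where "B = z3 + w * (z2 - z3)"
  have "((\<lambda>w. w * (z1 + z3 + w * (z2 - z1 - z3))) has_field_derivative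
      (z1 + z3 + 2 * w * (z2 - z1 - z3))) (at w)"
    by (auto intro!: derivative_eq_intros simp: algebra_simps)
  moreover have "((\<lambda>w. 2 * z1 * z3 * (z1 + w * (z2 - z1)) * (z3 + w * (z2 - z3)))
      has_field_derivative 2 * z1 * z3 * ((z2 - z1) * B + A * (z2 - z3))) (at w)"
    unfolding A_def B_def by (auto intro!: derivative_eq_intros simp: algebra_simps)
  moreover have "2 * z1 * z3 * (z1 + w * (z2 - z1)) * (z3 + w * (z2 - z3)) \<noteq> 0"
    using assms by simp
  ultimately have deriv: "((\<lambda>w. w * (z1 + z3 + w * (z2 - z1 - z3))
                / (2 * z1 * z3 * (z1 + w * (z2 - z1)) * (z3 + w * (z2 - z3))))
     has_field_derivative
       ((z1 + z3 + 2 * w * (z2 - z1 - z3)) * (2 * z1 * z3 * A * B)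
         - w * (z1 + z3 + w * (z2 - z1 - z3)) * (2 * z1 * z3 * ((z2 - z1) * B + A * (z2 - z3))))
       / ((2 * z1 * z3 * A * B) * (2 * z1 * z3 * A * B))) (at w)"
    unfolding A_def B_def by (rule DERIV_divide)
  have num: "(z1 + z3 + 2 * w * (z2 - z1 - z3)) * (2 * z1 * z3 * A * B)
       - w * (z1 + z3 + w * (z2 - z1 - z3)) * (2 * z1 * z3 * ((z2 - z1) * B + A * (z2 - z3)))
     = 2 * z1 * z3 * (z1 * z3 * ((1 - w) * (2 * A + (z3 - z1) * (1 - w))))"
    unfolding A_def B_def by algebra
  have "((z1 + z3 + 2 * w * (z2 - z1 - z3)) * (2 * z1 * z3 * A * B)
         - w * (z1 + z3 + w * (z2 - z1 - z3)) * (2 * z1 * z3 * ((z2 - z1) * B + A * (z2 - z3))))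
       / ((2 * z1 * z3 * A * B) * (2 * z1 * z3 * A * B))
     = (1 - w) * (2 * A + (z3 - z1) * (1 - w)) / (2 * A^2 * B^2)"
    unfolding num
  proof (subst frac_eq_eq)
    show "2 * z1 * z3 * A * B * (2 * z1 * z3 * A * B) \<noteq> 0" "2 * A\<^sup>2 * B\<^sup>2 \<noteq> 0"
      using assms A_def B_def by simp_all
  qed algebra
  then show ?thesis using deriv unfolding A_def B_def by simp
qed

lemma triangle_combination_nonzero:
  fixes z1 z2 z3 :: complex
  assumes "0 < Re z1" "0 < Re z2" "0 < Re z3" "0 \<le> s" "0 \<le> t" "s + t \<le> 1"
  shows "z1 + of_real s * (z2 - z1) + of_real t * (z3 - z1) \<noteq> 0"
proof -
  have "0 < (1 - s - t) * Re z1 + s * Re z2 + t * Re z3"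
    using assms by (smt (verit) mult_nonneg_nonneg mult_pos_pos)
  then have "0 < Re (z1 + of_real s * (z2 - z1) + of_real t * (z3 - z1))"
    by (simp add: algebra_simps)
  then show ?thesis by (metis less_irrefl zero_complex.sel(1))
qed

lemma integral_open_std_triangle_iterated:
  fixes f :: "real \<times> real \<Rightarrow> 'a::euclidean_space"
  assumes cont: "continuous_on {(s, t). 0 \<le> s \<and> 0 \<le> t \<and> s + t \<le> 1} f"
  shows "integral open_std_triangle f = (LBINT s=0..1. (LBINT t=0..ereal (1 - s). f (s, t)))"
proof -
  define T where "T = open_std_triangle"
  define C where "C = {(s, t). 0 \<le> s \<and> 0 \<le> t \<and> s + t \<le> (1::real)}"
  have T_open: "open T"
  proof -
    have "T = {x. 0 < fst x} \<inter> {x. 0 < snd x} \<inter> {x. fst x + snd x < (1::real)}"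
      unfolding T_def open_std_triangle_def by auto
    then show ?thesis by (simp add: open_Int open_Collect_less continuous_intros)
  qed
  have "T \<subseteq> C" unfolding T_def C_def open_std_triangle_def by auto
  have "compact C"
    unfolding compact_eq_bounded_closed
  proof
    show "bounded C"
      by (rule bounded_subset[OF compact_imp_bounded[OF compact_cbox[of "(0,0)" "(1,1)"]]])
         (auto simp: C_def cbox_Pair_eq)
    have "C = {x. 0 \<le> fst x} \<inter> {x. 0 \<le> snd x} \<inter> {x. fst x + snd x \<le> (1::real)}"
      unfolding C_def by auto
    then show "closed C" by (simp add: closed_Int closed_Collect_le continuous_intros)
  qed
  then obtain B where B: "\<And>x. x \<in> C \<Longrightarrow> norm (f x) \<le> B"
    using compact_imp_bounded[OF compact_continuous_image[OF cont[folded C_def]]]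
    by (auto simp: bounded_iff)
  have "T \<subseteq> cbox (0, 0) (1, 1)"
    by (auto simp: T_def open_std_triangle_def cbox_Pair_eq)
  then have "emeasure lborel T \<le> emeasure lborel (cbox (0::real, 0::real) (1, 1))"
    by (rule emeasure_mono) simp
  then have T_finite: "emeasure lborel T < \<infinity>"
    using emeasure_lborel_cbox_finite[of "(0::real, 0::real)" "(1, 1)"]
    by (simp add: order_le_less_trans)
  have integrable: "set_integrable lborel T f"
    unfolding set_integrable_def
  proof (rule integrableI_bounded_set[where A=T and B=B])
    show "T \<in> sets lborel" using T_open by simp
    show "(\<lambda>x. indicator T x *\<^sub>R f x) \<in> borel_measurable lborel"
      using borel_measurable_continuous_on_indicator[of T f] T_open
        continuous_on_subset[OF cont[folded C_def] \<open>T \<subseteq> C\<close>] by simp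
  qed (use T_finite B \<open>T \<subseteq> C\<close> in \<open>auto simp: indicator_def intro!: AE_I2\<close>)
  have slice: "(\<integral>t. indicator T (s, t) *\<^sub>R f (s, t) \<partial>lborel)
      = indicator {0<..<1} s *\<^sub>R (LBINT t=0..ereal (1 - s). f (s, t))" for s
  proof (cases "0 < s \<and> s < 1")
    case True
    then have "indicator T (s, t) = (indicator {0<..<1-s} t :: real)" for t
      unfolding T_def open_std_triangle_def by (auto simp: indicator_def)
    then show ?thesis
      using True by (simp add: interval_lebesgue_integral_le_eq set_lebesgue_integral_def
          einterval_eq zero_ereal_def one_ereal_def)
  next
    case False
    then have "indicator T (s, t) = (0::real)" for t
      unfolding T_def open_std_triangle_def by (auto simp: indicator_def)
    then show ?thesis using False by simp
  qed
  have "integral T f = (LINT x:T|lborel. f x)"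
    using set_borel_integral_eq_integral(2)[OF integrable] by simp
  also have "\<dots> = (\<integral>s. (\<integral>t. indicator T (s, t) *\<^sub>R f (s, t) \<partial>lborel) \<partial>lborel)"
    using lborel_pair.integral_fst'
        [OF integrable[unfolded set_integrable_def lborel_prod[symmetric]]]
    by (simp add: set_lebesgue_integral_def lborel_prod)
  also have "\<dots> = (LBINT s=0..1. (LBINT t=0..ereal (1 - s). f (s, t)))"
    unfolding slice
    by (simp add: interval_lebesgue_integral_le_eq set_lebesgue_integral_def einterval_eq
        zero_ereal_def one_ereal_def)
  finally show ?thesis unfolding T_def .
qed

lemma integral_open_std_triangle_inverse_cube:
  fixes z1 z2 z3 :: complex
  assumes "0 < Re z1" "0 < Re z2" "0 < Re z3"
  shows "integral open_std_triangle
           (\<lambda>(s, t). 1 / (z1 + of_real s * (z2 - z1) + of_real t * (z3 - z1))^3)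
         = 1 / (2 * z1 * z2 * z3)"
proof -
  define L where "L s t = z1 + of_real s * (z2 - z1) + of_real t * (z3 - z1)" for s t
  have L_nonzero: "L s t \<noteq> 0" if "0 \<le> s" "0 \<le> t" "s + t \<le> 1" for s t
    unfolding L_def using triangle_combination_nonzero[OF assms that] .
  define G where
    "G s w = w * (2 * L s 0 + (z3 - z1) * w) / (2 * (L s 0)^2 * (L s 0 + (z3 - z1) * w)^2)" for s w
  define H where "H w = (1 - w) * (2 * (z1 + w * (z2 - z1)) + (z3 - z1) * (1 - w))
      / (2 * (z1 + w * (z2 - z1))^2 * (z3 + w * (z2 - z3))^2)" for w
  define R where "R w = w * (z1 + z3 + w * (z2 - z1 - z3))
      / (2 * z1 * z3 * (z1 + w * (z2 - z1)) * (z3 + w * (z2 - z3)))" for w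
  have edge_1: "z1 + of_real s * (z2 - z1) = L s 0" for s
    unfolding L_def by simp
  have edge_2: "z3 + of_real s * (z2 - z3) = L s (1 - s)" for s
    unfolding L_def by (simp add: algebra_simps)
  have edge_nonzero: "z1 + of_real s * (z2 - z1) \<noteq> 0" "z3 + of_real s * (z2 - z3) \<noteq> 0"
    if "0 \<le> s" "s \<le> 1" for s
    using L_nonzero[of s 0] L_nonzero[of s "1 - s"] that unfolding edge_1 edge_2 by auto
  have inner: "(LBINT t=0..ereal (1 - s). 1 / (L s t)^3) = H (of_real s)" if "0 \<le> s" "s \<le> 1" for s
  proof -
    have "(LBINT t=ereal 0..ereal (1 - s). 1 / (L s t)^3) = G s (of_real (1 - s)) - G s (of_real 0)"
    proof (rule interval_integral_FTC_finite)
      show "continuous_on {min 0 (1 - s)..max 0 (1 - s)} (\<lambda>t. 1 / (L s t)^3)"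
        using that L_nonzero unfolding L_def by (intro continuous_intros) auto
      fix t assume "min 0 (1 - s) \<le> t" "t \<le> max 0 (1 - s)"
      then have "L s 0 \<noteq> 0" "L s 0 + (z3 - z1) * of_real t \<noteq> 0"
        using that L_nonzero[of s 0] L_nonzero[of s t] by (auto simp: L_def algebra_simps)
      from has_vector_derivative_real_field[OF inverse_cube_antiderivative[OF this]]
      show "((\<lambda>t. G s (of_real t)) has_vector_derivative 1 / (L s t)^3)
          (at t within {min 0 (1 - s)..max 0 (1 - s)})"
        unfolding G_def by (simp add: L_def algebra_simps)
    qed
    also have "\<dots> = H (of_real s)"
      unfolding G_def H_def edge_1 edge_2 by (simp add: L_def algebra_simps)
    finally show ?thesis by (simp add: zero_ereal_def)
  qed
  have outer: "(LBINT s=0..1. H (of_real s)) = R 1 - R 0"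
  proof -
    have "(LBINT s=ereal 0..ereal 1. H (of_real s)) = R (of_real 1) - R (of_real 0)"
    proof (rule interval_integral_FTC_finite)
      show "continuous_on {min 0 1..max 0 1} (\<lambda>s. H (of_real s))"
        using edge_nonzero unfolding H_def by (intro continuous_intros) auto
      fix s :: real assume "min 0 1 \<le> s" "s \<le> max 0 1"
      then have "z1 + of_real s * (z2 - z1) \<noteq> 0" "z3 + of_real s * (z2 - z3) \<noteq> 0"
        using edge_nonzero by auto
      moreover have "z1 \<noteq> 0" "z3 \<noteq> 0"
        using L_nonzero[of 0 0] L_nonzero[of 0 1] by (simp_all add: L_def)
      ultimately show "((\<lambda>s. R (of_real s)) has_vector_derivative H (of_real s))
          (at s within {min 0 1..max 0 1})"
        unfolding R_def H_def
        by (intro has_vector_derivative_real_field triangle_slice_antiderivative)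
    qed
    then show ?thesis by (simp add: zero_ereal_def one_ereal_def)
  qed
  have "continuous_on {(s, t). 0 \<le> s \<and> 0 \<le> t \<and> s + t \<le> 1} (\<lambda>(s, t). 1 / (L s t)^3)"
    using L_nonzero unfolding L_def case_prod_beta' by (intro continuous_intros) auto
  from integral_open_std_triangle_iterated[OF this]
  have "integral open_std_triangle (\<lambda>(s, t). 1 / (L s t)^3)
      = (LBINT s=0..1. (LBINT t=0..ereal (1 - s). 1 / (L s t)^3))"
    by simp
  also have "\<dots> = (LBINT s=0..1. H (of_real s))"
    using inner
    by (intro interval_integral_cong) (auto simp: einterval_eq zero_ereal_def one_ereal_def)
  also have "\<dots> = 1 / (2 * z1 * z2 * z3)"
    using L_nonzero[of 0 0] L_nonzero[of 1 0] L_nonzero[of 0 1]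
    unfolding outer R_def by (simp add: L_def)
  finally show ?thesis unfolding L_def .
qed

lemma cvec_scaleR: "cvec (r *\<^sub>R v) = of_real r *s cvec v"
  by (simp add: cvec_def vec_eq_iff)

lemma bdot_cvec_scaleR: "bdot (cvec (r *\<^sub>R v)) \<theta> = of_real r * bdot (cvec v) \<theta>"
  by (simp add: bdot_def cvec_def sum_3 algebra_simps)

lemma triple_product_expansion:
  fixes a1 a2 a3 v :: "real^3"
  shows "(a1 \<bullet> cross3 a2 a3) *\<^sub>R v
    = (v \<bullet> a3) *\<^sub>R cross3 a1 a2 + (v \<bullet> a1) *\<^sub>R cross3 a2 a3 + (v \<bullet> a2) *\<^sub>R cross3 a3 a1"
  by (simp add: cross3_simps forall_3)

lemma triple_product_expansion_complex:
  fixes a1 a2 a3 :: "real^3" and \<theta> :: "complex^3"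
  shows "of_real (a1 \<bullet> cross3 a2 a3) *s \<theta>
    = bdot (cvec a3) \<theta> *s cvec (cross3 a1 a2) + bdot (cvec a1) \<theta> *s cvec (cross3 a2 a3)
      + bdot (cvec a2) \<theta> *s cvec (cross3 a3 a1)"
  by (simp add: vec_eq_iff forall_3 bdot_def cvec_def sum_3 cross3_def inner_vec_def algebra_simps)

lemma triple_product_cyclic:
  fixes a b c :: "real^3"
  shows "b \<bullet> cross3 c a = a \<bullet> cross3 b c" "c \<bullet> cross3 a b = a \<bullet> cross3 b c"
  by (simp_all add: cross3_simps)

lemma cross_cross_cyclic:
  fixes a b c :: "real^3"
  shows "cross3 (cross3 a b) (cross3 c a) = - (a \<bullet> cross3 b c) *\<^sub>R a"
  by (simp add: cross3_simps forall_3)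

lemma abs_triple_product_eq_height_mult_norm_cross:
  fixes u a1 a2 a3 :: "real^3"
  assumes "norm u = 1" "a1 \<bullet> u = h" "a2 \<bullet> u = h" "a3 \<bullet> u = h"
  shows "\<bar>a1 \<bullet> cross3 a2 a3\<bar> = \<bar>h\<bar> * norm (cross3 (a2 - a1) (a3 - a1))"
proof -
  define N where "N = cross3 (a2 - a1) (a3 - a1)"
  have "cross3 u N = 0"
    unfolding N_def Lagrange using assms(2-4) by (simp add: inner_diff_right inner_commute)
  then have N_eq: "N = (u \<bullet> N) *\<^sub>R u"
    using Lagrange[of u u N] assms(1) by (simp add: norm_eq_1)
  have "a1 \<bullet> cross3 a2 a3 = N \<bullet> a1"
    unfolding N_def by (simp add: cross3_simps)
  also have "\<dots> = h * (u \<bullet> N)"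
    using assms(2) by (subst N_eq) (simp add: inner_commute)
  finally show ?thesis
    using N_eq assms(1) unfolding N_def[symmetric] by (metis abs_mult mult_1_right norm_scaleR)
qed

lemma triple_product_nonzero_if_outward_normals:
  assumes "outward_unit_normal \<nu>1 p y1 y2 y3" "outward_unit_normal \<nu>2 p y2 y3 y1"
    and "outward_unit_normal \<nu>3 p y3 y1 y2"
  shows "(y1 - p) \<bullet> cross3 (y2 - p) (y3 - p) \<noteq> 0"
proof
  define a1 a2 a3 where "a1 = y1 - p" and "a2 = y2 - p" and "a3 = y3 - p"
  assume "(y1 - p) \<bullet> cross3 (y2 - p) (y3 - p) = 0"
  then have "(\<nu>1 \<bullet> a3) *\<^sub>R cross3 a1 a2 = 0"
    using triple_product_expansion[of a1 a2 a3 \<nu>1] assms(1)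
    unfolding a1_def a2_def a3_def outward_unit_normal_def by simp
  then have "cross3 a1 a2 = 0"
    using assms(1) unfolding a3_def outward_unit_normal_def by simp
  then have "(a2 \<bullet> a2) *\<^sub>R a1 = (a2 \<bullet> a1) *\<^sub>R a2"
    using Lagrange[of a2 a1 a2] by simp
  then have "(a2 \<bullet> a2) * (\<nu>2 \<bullet> a1) = (a2 \<bullet> a1) * (\<nu>2 \<bullet> a2)"
    by (metis inner_scaleR_right)
  then have "a2 = 0"
    using assms(2) unfolding a1_def a2_def outward_unit_normal_def by simp
  then show False
    using assms(3) unfolding a2_def outward_unit_normal_def by simp
qed

lemma outward_unit_normal_eq_sgn_cross:
  assumes "outward_unit_normal n p a b q" and "(a - p) \<bullet> cross3 (b - p) (q - p) \<noteq> 0"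
  shows "n = - sgn ((a - p) \<bullet> cross3 (b - p) (q - p)) *\<^sub>R sgn (cross3 (a - p) (b - p))"
proof -
  define D where "D = (a - p) \<bullet> cross3 (b - p) (q - p)"
  define x where "x = cross3 (a - p) (b - p)"
  define \<kappa> where "\<kappa> = (n \<bullet> (q - p)) / D"
  have n: "norm n = 1" "n \<bullet> (a - p) = 0" "n \<bullet> (b - p) = 0" "n \<bullet> (q - p) < 0"
    using assms(1) unfolding outward_unit_normal_def by auto
  have "D *\<^sub>R n = (n \<bullet> (q - p)) *\<^sub>R x"
    using triple_product_expansion[of "a - p" "b - p" "q - p" n] n unfolding D_def x_def by simp
  then have "inverse D *\<^sub>R (D *\<^sub>R n) = \<kappa> *\<^sub>R x"
    unfolding \<kappa>_def by (simp add: divide_inverse mult.commute)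
  then have n_eq: "n = \<kappa> *\<^sub>R x"
    using assms(2) unfolding D_def by simp
  have "sgn \<kappa> = - sgn D"
    using n(4) assms(2) unfolding \<kappa>_def D_def
    by (auto simp: sgn_if divide_less_0_iff zero_less_divide_iff)
  then have "- sgn D * \<bar>\<kappa>\<bar> = \<kappa>"
    by (metis minus_mult_left sgn_mult_abs)
  moreover have "sgn x = \<bar>\<kappa>\<bar> *\<^sub>R x"
  proof -
    have "norm x * \<bar>\<kappa>\<bar> = 1" using n(1) n_eq by (simp add: mult.commute)
    then have "inverse (norm x) = \<bar>\<kappa>\<bar>" by (rule inverse_unique)
    then show ?thesis by (simp add: sgn_div_norm)
  qed
  ultimately show ?thesis
    unfolding D_def[symmetric] x_def[symmetric] by (simp add: n_eq)
qed

lemma outward_unit_normals_eq_sgn_cross: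
  assumes "outward_unit_normal \<nu>1 p y1 y2 y3" "outward_unit_normal \<nu>2 p y2 y3 y1"
    and "outward_unit_normal \<nu>3 p y3 y1 y2"
  defines "D \<equiv> (y1 - p) \<bullet> cross3 (y2 - p) (y3 - p)"
  shows "\<nu>1 = - sgn D *\<^sub>R sgn (cross3 (y1 - p) (y2 - p))"
    and "\<nu>2 = - sgn D *\<^sub>R sgn (cross3 (y2 - p) (y3 - p))"
    and "\<nu>3 = - sgn D *\<^sub>R sgn (cross3 (y3 - p) (y1 - p))"
proof -
  have "D \<noteq> 0"
    unfolding D_def by (rule triple_product_nonzero_if_outward_normals[OF assms(1-3)])
  moreover have "(y2 - p) \<bullet> cross3 (y3 - p) (y1 - p) = D" "(y3 - p) \<bullet> cross3 (y1 - p) (y2 - p) = D"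
    unfolding D_def by (rule triple_product_cyclic)+
  ultimately show "\<nu>1 = - sgn D *\<^sub>R sgn (cross3 (y1 - p) (y2 - p))"
    and "\<nu>2 = - sgn D *\<^sub>R sgn (cross3 (y2 - p) (y3 - p))"
    and "\<nu>3 = - sgn D *\<^sub>R sgn (cross3 (y3 - p) (y1 - p))"
    using outward_unit_normal_eq_sgn_cross[OF assms(1)]
      outward_unit_normal_eq_sgn_cross[OF assms(2)] outward_unit_normal_eq_sgn_cross[OF assms(3)]
    unfolding D_def by auto
qed

lemma norm_cross_div_bdot_scaleR:
  fixes a b :: "real^3" and \<theta> :: "complex^3"
  assumes "0 < \<alpha> * \<beta>"
  shows "of_real (norm (cross3 (\<alpha> *\<^sub>R a) (\<beta> *\<^sub>R b)))
           / (bdot (cvec (\<alpha> *\<^sub>R a)) \<theta> * bdot (cvec (\<beta> *\<^sub>R b)) \<theta>)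
         = of_real (norm (cross3 a b)) / (bdot (cvec a) \<theta> * bdot (cvec b) \<theta>)"
proof -
  have "norm (cross3 (\<alpha> *\<^sub>R a) (\<beta> *\<^sub>R b)) = \<bar>\<alpha> * \<beta>\<bar> * norm (cross3 a b)"
    by (simp add: cross_mult_left cross_mult_right abs_mult)
  then have "norm (cross3 (\<alpha> *\<^sub>R a) (\<beta> *\<^sub>R b)) = (\<alpha> * \<beta>) * norm (cross3 a b)"
    using assms by simp
  moreover have "\<alpha> \<noteq> 0" "\<beta> \<noteq> 0" using assms by auto
  ultimately show ?thesis by (simp add: bdot_cvec_scaleR field_simps)
qed

lemma face_term_eq:
  fixes a b c nab nbc nca :: "real^3" and \<theta> :: "complex^3"
  assumes D: "a \<bullet> cross3 b c \<noteq> 0" and \<sigma>: "\<bar>\<sigma>\<bar> = 1"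
    and nab: "nab = \<sigma> *\<^sub>R sgn (cross3 a b)"
    and nbc: "nbc = \<sigma> *\<^sub>R sgn (cross3 b c)"
    and nca: "nca = \<sigma> *\<^sub>R sgn (cross3 c a)"
  shows "(of_real (norm (cross3 (cross3 nab nca) (cross3 nbc nab)))
            / (bdot (cvec (cross3 nab nca)) \<theta> * bdot (cvec (cross3 nbc nab)) \<theta>)) *s cvec nab
         = (of_real \<sigma> / (bdot (cvec a) \<theta> * bdot (cvec b) \<theta>)) *s cvec (cross3 a b)"
proof -
  define D where "D = a \<bullet> cross3 b c"
  have "cross3 a b \<noteq> 0" "cross3 b c \<noteq> 0" "cross3 c a \<noteq> 0"
    using D triple_product_cyclic[of a b c] by auto
  then have norms_pos: "0 < norm (cross3 a b)" "0 < norm (cross3 b c)" "0 < norm (cross3 c a)"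
    by simp_all
  have \<sigma>\<sigma>: "\<sigma> * \<sigma> = 1" using \<sigma> by (metis abs_mult_self_eq mult_1)
  define \<alpha> where "\<alpha> = - D / (norm (cross3 a b) * norm (cross3 c a))"
  define \<beta> where "\<beta> = - D / (norm (cross3 b c) * norm (cross3 a b))"
  have "cross3 nab nca = \<alpha> *\<^sub>R a"
    using cross_cross_cyclic[of a b c] \<sigma>\<sigma>
    by (simp add: nab nca \<alpha>_def D_def sgn_div_norm cross_mult_left cross_mult_right divide_inverse)
  moreover have "cross3 nbc nab = \<beta> *\<^sub>R b"
    using cross_cross_cyclic[of b c a] triple_product_cyclic[of a b c] \<sigma>\<sigma>
    by (simp add: nab nbc \<beta>_def D_def sgn_div_norm cross_mult_left cross_mult_right divide_inverse
        mult.commute)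
  moreover have "0 < \<alpha> * \<beta>"
  proof -
    have "\<alpha> * \<beta> = (D * D)
        / ((norm (cross3 a b) * norm (cross3 c a)) * (norm (cross3 b c) * norm (cross3 a b)))"
      unfolding \<alpha>_def \<beta>_def by simp
    moreover have "0 < D * D" using D unfolding D_def by (metis not_real_square_gt_zero)
    ultimately show ?thesis using norms_pos by simp
  qed
  ultimately have coefficient: "of_real (norm (cross3 (cross3 nab nca) (cross3 nbc nab)))
            / (bdot (cvec (cross3 nab nca)) \<theta> * bdot (cvec (cross3 nbc nab)) \<theta>)
      = of_real (norm (cross3 a b)) / (bdot (cvec a) \<theta> * bdot (cvec b) \<theta>)"
    by (simp add: norm_cross_div_bdot_scaleR)
  have "norm (cross3 a b) *\<^sub>R nab
      = (norm (cross3 a b) * inverse (norm (cross3 a b)) * \<sigma>) *\<^sub>R cross3 a b"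
    by (simp add: nab sgn_div_norm mult.commute)
  then have "norm (cross3 a b) *\<^sub>R nab = \<sigma> *\<^sub>R cross3 a b"
    using norms_pos by simp
  then have "of_real (norm (cross3 a b)) *s cvec nab = of_real \<sigma> *s cvec (cross3 a b)"
    by (metis cvec_scaleR)
  with coefficient show ?thesis
    by (metis (no_types, lifting) divide_inverse_commute vector_smult_assoc)
qed

lemma sum_face_terms_eq:
  fixes a1 a2 a3 \<nu>1 \<nu>2 \<nu>3 :: "real^3" and \<theta> :: "complex^3"
  assumes D: "a1 \<bullet> cross3 a2 a3 \<noteq> 0" and \<sigma>: "\<bar>\<sigma>\<bar> = 1"
    and \<nu>: "\<nu>1 = \<sigma> *\<^sub>R sgn (cross3 a1 a2)" "\<nu>2 = \<sigma> *\<^sub>R sgn (cross3 a2 a3)"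
      "\<nu>3 = \<sigma> *\<^sub>R sgn (cross3 a3 a1)"
    and l: "bdot (cvec a1) \<theta> \<noteq> 0" "bdot (cvec a2) \<theta> \<noteq> 0" "bdot (cvec a3) \<theta> \<noteq> 0"
  shows "(of_real (norm (cross3 (cross3 \<nu>1 \<nu>3) (cross3 \<nu>2 \<nu>1)))
            / (bdot (cvec (cross3 \<nu>1 \<nu>3)) \<theta> * bdot (cvec (cross3 \<nu>2 \<nu>1)) \<theta>)) *s cvec \<nu>1
       + (of_real (norm (cross3 (cross3 \<nu>2 \<nu>1) (cross3 \<nu>3 \<nu>2)))
            / (bdot (cvec (cross3 \<nu>2 \<nu>1)) \<theta> * bdot (cvec (cross3 \<nu>3 \<nu>2)) \<theta>)) *s cvec \<nu>2
       + (of_real (norm (cross3 (cross3 \<nu>3 \<nu>2) (cross3 \<nu>1 \<nu>3)))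
            / (bdot (cvec (cross3 \<nu>3 \<nu>2)) \<theta> * bdot (cvec (cross3 \<nu>1 \<nu>3)) \<theta>)) *s cvec \<nu>3
     = (of_real (\<sigma> * (a1 \<bullet> cross3 a2 a3))
         / (bdot (cvec a1) \<theta> * bdot (cvec a2) \<theta> * bdot (cvec a3) \<theta>)) *s \<theta>"
proof -
  have "a2 \<bullet> cross3 a3 a1 \<noteq> 0" "a3 \<bullet> cross3 a1 a2 \<noteq> 0"
    using D triple_product_cyclic[of a1 a2 a3] by simp_all
  then have "(of_real (\<sigma> * (a1 \<bullet> cross3 a2 a3))
         / (bdot (cvec a1) \<theta> * bdot (cvec a2) \<theta> * bdot (cvec a3) \<theta>)) *s \<theta>
      = (of_real \<sigma> / (bdot (cvec a1) \<theta> * bdot (cvec a2) \<theta>)) *s cvec (cross3 a1 a2)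
      + (of_real \<sigma> / (bdot (cvec a2) \<theta> * bdot (cvec a3) \<theta>)) *s cvec (cross3 a2 a3)
      + (of_real \<sigma> / (bdot (cvec a3) \<theta> * bdot (cvec a1) \<theta>)) *s cvec (cross3 a3 a1)"
    using triple_product_expansion_complex[of a1 a2 a3 \<theta>] l
    by (simp add: vec_eq_iff field_simps)
  then show ?thesis
    using face_term_eq[OF D \<sigma> \<nu>(1,2,3)] face_term_eq[OF \<open>a2 \<bullet> cross3 a3 a1 \<noteq> 0\<close> \<sigma> \<nu>(2,3,1)]
      face_term_eq[OF \<open>a3 \<bullet> cross3 a1 a2 \<noteq> 0\<close> \<sigma> \<nu>(3,1,2)]
    by simp
qed

lemma norm_omega_c:
  assumes "norm \<omega> = 1"
  shows "norm (omega_c c \<omega>) = 1"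
proof -
  have "\<omega>$1 * \<omega>$1 + \<omega>$2 * \<omega>$2 = 1"
    using assms by (simp add: norm_eq_1 inner_vec_def sum_2)
  then have "vector [c * \<omega>$1, c * \<omega>$2, -1] \<bullet> (vector [c * \<omega>$1, c * \<omega>$2, -1] :: real^3) = c^2 + 1"
    by (simp add: inner_vec_def sum_3 power2_eq_square algebra_simps)
      (metis distrib_left mult.commute mult_1_right)
  moreover have "0 < c^2 + 1"
    by (intro add_nonneg_pos) simp_all
  ultimately show ?thesis
    unfolding omega_c_def by (simp add: norm_eq_sqrt_inner)
qed

lemma bdot_cvec_vartheta:
  "bdot (cvec v) (vartheta c \<omega> \<omega>p)
     = of_real (sqrt (c^2 + 1) * (v \<bullet> omega_c c \<omega>))
       + \<i> * of_real (c * (v \<bullet> vector [\<omega>p$1, \<omega>p$2, 0]))"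
proof -
  have "0 < c^2 + 1"
    by (intro add_nonneg_pos) simp_all
  then show ?thesis
    by (simp add: complex_eq_iff bdot_def cvec_def vartheta_def omega_c_def sum_3 inner_vec_def
        algebra_simps)
qed

lemma bdot_cvec_vartheta_nonzero:
  assumes "v \<bullet> omega_c c \<omega> \<noteq> 0"
  shows "bdot (cvec v) (vartheta c \<omega> \<omega>p) \<noteq> 0"
proof -
  have "0 < c^2 + 1"
    by (intro add_nonneg_pos) simp_all
  then show ?thesis
    using assms unfolding bdot_cvec_vartheta by (simp add: complex_eq_iff)
qed

lemma K_D_eq_abs_triple_product:
  fixes c \<delta> :: real and \<omega> \<omega>p :: "real^2" and p y1 y2 y3 :: "real^3"
  assumes "0 < c" "0 < \<delta>" "norm \<omega> = 1"
    and "(y1 - p) \<bullet> omega_c c \<omega> = - \<delta>" "(y2 - p) \<bullet> omega_c c \<omega> = - \<delta>"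
    and "(y3 - p) \<bullet> omega_c c \<omega> = - \<delta>"
  shows "K_D c \<omega>p \<delta> p y1 y2 y3
    = - of_real (c^3 * \<bar>(y1 - p) \<bullet> cross3 (y2 - p) (y3 - p)\<bar>)
        / (bdot (cvec (y1 - p)) (vartheta c \<omega> \<omega>p) * bdot (cvec (y2 - p)) (vartheta c \<omega> \<omega>p)
           * bdot (cvec (y3 - p)) (vartheta c \<omega> \<omega>p))"
proof -
  define k where "k = \<delta> * sqrt (c^2 + 1) / c"
  define z where "z y = of_real k - \<i> * of_real ((y - p) \<bullet> vector [\<omega>p$1, \<omega>p$2, 0])" for y
  define N where "N = cross3 (y2 - y1) (y3 - y1)"
  have "0 < k"
    using assms(1,2) unfolding k_def by (simp add: add_nonneg_pos)
  then have Re_z: "0 < Re (z y)" for y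
    unfolding z_def by simp
  have z_affine: "z (y1 + s *\<^sub>R (y2 - y1) + t *\<^sub>R (y3 - y1))
      = z y1 + of_real s * (z y2 - z y1) + of_real t * (z y3 - z y1)" for s t
    unfolding z_def by (simp add: inner_add_left inner_diff_left algebra_simps)
  have bdot_eq: "bdot (cvec (y - p)) (vartheta c \<omega> \<omega>p) = - of_real c * z y"
    if "(y - p) \<bullet> omega_c c \<omega> = - \<delta>" for y
    using that assms(1) unfolding bdot_cvec_vartheta z_def k_def
    by (simp add: complex_eq_iff)
  have "K_D c \<omega>p \<delta> p y1 y2 y3 = of_real (2 * \<delta>) * (of_real (norm N)
      * integral open_std_triangle
          (\<lambda>(s, t). 1 / (z y1 + of_real s * (z y2 - z y1) + of_real t * (z y3 - z y1))^3))"
    unfolding K_D_def triangle_surface_integral_def z_affine[symmetric] N_def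
    by (simp add: z_def k_def case_prod_beta' flip: integral_mult_right)
  also have "\<dots> = of_real (\<delta> * norm N) / (z y1 * z y2 * z y3)"
    using integral_open_std_triangle_inverse_cube[OF Re_z Re_z Re_z] by simp
  also have "\<delta> * norm N = \<bar>(y1 - p) \<bullet> cross3 (y2 - p) (y3 - p)\<bar>"
    using abs_triple_product_eq_height_mult_norm_cross[OF norm_omega_c[OF assms(3)] assms(4-6)]
      assms(2)
    unfolding N_def by simp
  finally show ?thesis
    using assms(1) unfolding bdot_eq[OF assms(4)] bdot_eq[OF assms(5)] bdot_eq[OF assms(6)]
    by (simp add: power3_eq_cube)
qed

theorem proposition4p2:
  fixes c \<delta> :: real and \<omega> \<omega>p :: "real^2" and p y1 y2 y3 \<nu>1 \<nu>2 \<nu>3 :: "real^3"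
  assumes "c > 0"
    and "norm \<omega> = 1" and "norm \<omega>p = 1" and "\<omega> \<bullet> \<omega>p = 0"
    and "\<delta> > 0"
    and "y1 \<bullet> omega_c c \<omega> = p \<bullet> omega_c c \<omega> - \<delta>"
    and "y2 \<bullet> omega_c c \<omega> = p \<bullet> omega_c c \<omega> - \<delta>"
    and "y3 \<bullet> omega_c c \<omega> = p \<bullet> omega_c c \<omega> - \<delta>"
    and "card {p, y1, y2, y3} = 4" and "\<not> affine_dependent {p, y1, y2, y3}"
    and "outward_unit_normal \<nu>1 p y1 y2 y3"
    and "outward_unit_normal \<nu>2 p y2 y3 y1"
    and "outward_unit_normal \<nu>3 p y3 y1 y2"
    and "cross3 \<nu>1 \<nu>3 \<bullet> omega_c c \<omega> < 0"
    and "cross3 \<nu>2 \<nu>1 \<bullet> omega_c c \<omega> < 0"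
    and "cross3 \<nu>3 \<nu>2 \<bullet> omega_c c \<omega> < 0"
  shows "K_D c \<omega>p \<delta> p y1 y2 y3 *s vartheta c \<omega> \<omega>p =
    complex_of_real (c^3) *s
      ( (complex_of_real (norm (cross3 (cross3 \<nu>1 \<nu>3) (cross3 \<nu>2 \<nu>1)))
          / (bdot (cvec (cross3 \<nu>1 \<nu>3)) (vartheta c \<omega> \<omega>p)
             * bdot (cvec (cross3 \<nu>2 \<nu>1)) (vartheta c \<omega> \<omega>p))) *s cvec \<nu>1
      + (complex_of_real (norm (cross3 (cross3 \<nu>2 \<nu>1) (cross3 \<nu>3 \<nu>2)))
          / (bdot (cvec (cross3 \<nu>2 \<nu>1)) (vartheta c \<omega> \<omega>p)
             * bdot (cvec (cross3 \<nu>3 \<nu>2)) (vartheta c \<omega> \<omega>p))) *s cvec \<nu>2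
      + (complex_of_real (norm (cross3 (cross3 \<nu>3 \<nu>2) (cross3 \<nu>1 \<nu>3)))
          / (bdot (cvec (cross3 \<nu>3 \<nu>2)) (vartheta c \<omega> \<omega>p)
             * bdot (cvec (cross3 \<nu>1 \<nu>3)) (vartheta c \<omega> \<omega>p))) *s cvec \<nu>3 )"
proof -
  define a1 a2 a3 where "a1 = y1 - p" and "a2 = y2 - p" and "a3 = y3 - p"
  have heights: "a1 \<bullet> omega_c c \<omega> = - \<delta>" "a2 \<bullet> omega_c c \<omega> = - \<delta>" "a3 \<bullet> omega_c c \<omega> = - \<delta>"
    using assms(6-8) unfolding a1_def a2_def a3_def by (simp_all add: inner_diff_left)
  then have "a1 \<bullet> omega_c c \<omega> \<noteq> 0" "a2 \<bullet> omega_c c \<omega> \<noteq> 0" "a3 \<bullet> omega_c c \<omega> \<noteq> 0"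
    using assms(5) by simp_all
  note bdot_nonzero = this[THEN bdot_cvec_vartheta_nonzero[of _ c \<omega> \<omega>p]]
  have nondegenerate: "a1 \<bullet> cross3 a2 a3 \<noteq> 0"
    using triple_product_nonzero_if_outward_normals[OF assms(11-13)]
    unfolding a1_def a2_def a3_def .
  then have unit_sign: "\<bar>- sgn (a1 \<bullet> cross3 a2 a3)\<bar> = 1"
    by (simp add: abs_sgn_eq)
  note normals = outward_unit_normals_eq_sgn_cross[OF assms(11-13), folded a1_def a2_def a3_def]
  show ?thesis
    unfolding sum_face_terms_eq[OF nondegenerate unit_sign normals bdot_nonzero]
      K_D_eq_abs_triple_product[OF assms(1,5,2) heights[unfolded a1_def a2_def a3_def]]
    by (simp add: vector_smult_assoc a1_def a2_def a3_def abs_sgn mult.commute)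
qed

end
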